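(* Let $\mathtt{W}_1',\mathtt{W}_2'\in\mathcal{U}^\ast$ be words, $j_1,j_2\in\mathbb{Z}_{>0}$, and $n_1,n_2\in\mathbb{Z}_{\geq0}$, and put $\mathtt{W}_1=\mathtt{W}_1'u_{j_1}u_0^{n_1}$, $\mathtt{W}_2=\mathtt{W}_2'u_{j_2}u_0^{n_2}$. Then \begin{align*} \mathtt{W}_1\ast\mathtt{W}_2 =& \sum_{\substack{0\le k\le j\le n_2\\ 0\le\varepsilon\le\min\{1,n_2-j\}}}\binom{n_1+k}{n_1}\binom{n_1}{j-k}\left(\mathtt{W}_1'\ast\mathtt{W}_2'u_{j_2}u_0^{n_2-j-\varepsilon}\right)u_{j_1}u_0^{n_1+k}\\ &+\sum_{\substack{0\le k\le j\le n_1\\ 0\le\varepsilon\le\min\{1,n_1-j\}}}\binom{n_2+k}{n_2}\binom{n_2}{j-k}\left(\mathtt{W}_1'u_{j_1}u_0^{n_1-j-\varepsilon}\ast\mathtt{W}_2'\right)u_{j_2}u_0^{n_2+k}\\ &+\sum_{k=0}^{n_2}\binom{n_1+k}{n_1}\binom{n_1}{n_2-k}(\mathtt{W}_1'\ast\mathtt{W}_2')u_{j_1+j_2}u_0^{n_1+k}. \end{align*}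
   Context: Let $\mathcal{U}=\{u_j\mid j\in\mathbb{Z}_{\geq0}\}$ be an alphabet; $\mathcal{U}^\ast$ is the set of words (finite concatenations of letters, including the empty word $\mathbf{1}$), and $\mathbb{Q}\langle\mathcal{U}\rangle$ is the $\mathbb{Q}$-vector space with basis $\mathcal{U}^\ast$, with concatenation extended bilinearly; $u_0^n$ denotes the word consisting of $n$ copies of $u_0$. The stuffle product $\ast$ on $\mathbb{Q}\langle\mathcal{U}\rangle$ is the $\mathbb{Q}$-bilinear product with $\mathbf{1}\ast\mathtt{W}=\mathtt{W}\ast\mathbf{1}=\mathtt{W}$ and, for $j_1,j_2\in\mathbb{Z}_{\ge0}$ and words $\mathtt{W}_1,\mathtt{W}_2$, $u_{j_1}\mathtt{W}_1\ast u_{j_2}\mathtt{W}_2 = u_{j_1}(\mathtt{W}_1\ast u_{j_2}\mathtt{W}_2)+u_{j_2}(u_{j_1}\mathtt{W}_1\ast\mathtt{W}_2)+u_{j_1+j_2}(\mathtt{W}_1\ast\mathtt{W}_2)$. Binomial coefficients $\binom{a}{b}$ with $b<0$ or $b>a$ are $0$. *)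

theory Defs
  imports Complex_Main
begin

text \<open>Words over the alphabet u_0, u_1, ... are lists of natural numbers (the letter u_j is j).
  An element of Q<U> is represented by its coefficient function on words (nat list => rat).\<close>

type_synonym word = "nat list"
type_synonym qpoly = "word \<Rightarrow> rat"

definition lcons :: "nat \<Rightarrow> qpoly \<Rightarrow> qpoly" where
  "lcons a P = (\<lambda>u. case u of [] \<Rightarrow> 0 | c # u' \<Rightarrow> (if c = a then P u' else 0))"

definition rconc :: "qpoly \<Rightarrow> word \<Rightarrow> qpoly" where
  "rconc P w = (\<lambda>u. if length w \<le> length u \<and> drop (length u - length w) u = w
                     then P (take (length u - length w) u) else 0)"

fun stuffle :: "word \<Rightarrow> word \<Rightarrow> qpoly" where
  "stuffle [] w = (\<lambda>u. if u = w then 1 else 0)"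
| "stuffle (a # v) [] = (\<lambda>u. if u = a # v then 1 else 0)"
| "stuffle (a # v) (b # w) =
     (\<lambda>u. lcons a (stuffle v (b # w)) u + lcons b (stuffle (a # v) w) u
          + lcons (a + b) (stuffle v w) u)"

end

theory Submission
  imports Defs
begin

(* Every word is either u_0^t, where both sides vanish for weight reasons, or w u_c u_0^t with
   c > 0. Read from the right, the stuffle recursion produces each trailing u_0 of such a word by
   removing a trailing u_0 from the first factor, from the second, or from both. So the
   coefficient of w u_c u_0^t is a sum over lattice paths of t steps (-1,0), (0,-1), (-1,-1)
   starting at (n1, n2). A path ending at (0, i) contributes, when c = j1, the coefficients of w
   in W1' * W2' u_j2 u_0^i and in W1' * W2' u_j2 u_0^(i-1) (the two values of epsilon); paths
   ending at (i, 0) behave symmetrically, and paths ending at (0, 0) also contribute the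
   coefficient of w in W1' * W2' when c = j1 + j2. Counting the paths from (n, m) to the origin
   gives the inner sums over k of the statement. *)

lemma rconc_altdef:
  "rconc P z u = (if \<exists>y. u = y @ z then P (take (length u - length z) u) else 0)"
proof -
  have "length z \<le> length u \<and> drop (length u - length z) u = z \<longleftrightarrow> (\<exists>y. u = y @ z)"
    by (metis append_take_drop_id diff_diff_cancel length_append le_add2 length_drop
        append_eq_conv_conj add_diff_cancel_right')
  then show ?thesis
    unfolding rconc_def by simp
qed

lemma rconc_append [simp]: "rconc P z (y @ z) = P y"
  by (simp add: rconc_altdef)

lemma rconc_snoc [simp]: "rconc P [a] (y @ [b]) = (if b = a then P y else 0)"
  by (auto simp: rconc_altdef)

lemma rconc_Nil [simp]: "rconc P (a # z) [] = 0"
  by (simp add: rconc_altdef)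

lemma lcons_add [simp]: "lcons c (\<lambda>u. P u + Q u) = (\<lambda>u. lcons c P u + lcons c Q u)"
  by (auto simp: lcons_def split: list.split)

lemma rconc_add [simp]: "rconc (\<lambda>u. P u + Q u) z = (\<lambda>u. rconc P z u + rconc Q z u)"
  by (auto simp: rconc_def)

lemma lcons_indicator [simp]:
  "lcons c (\<lambda>u. if u = w then 1 else 0) = (\<lambda>u. if u = c # w then 1 else 0)"
  by (auto simp: lcons_def split: list.split)

lemma rconc_indicator [simp]:
  "rconc (\<lambda>u. if u = w then 1 else 0) z = (\<lambda>u. if u = w @ z then 1 else 0)"
  by (rule ext) (auto simp: rconc_altdef)

lemma lcons_rconc_letter [simp]: "lcons c (rconc P [a]) = rconc (lcons c P) [a]"
proof
  fix u
  show "lcons c (rconc P [a]) u = rconc (lcons c P) [a] u"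
  proof (cases u rule: rev_cases)
    case (snoc ys y)
    then show ?thesis
      by (cases ys) (simp_all add: lcons_def rconc_altdef)
  qed (simp add: lcons_def)
qed

lemma stuffle_Nil_right [simp]: "stuffle v [] = (\<lambda>u. if u = v then 1 else 0)"
  by (cases v) auto

lemma stuffle_snoc:
  "stuffle (v @ [a]) (w @ [b]) =
     (\<lambda>u. rconc (stuffle v (w @ [b])) [a] u + rconc (stuffle (v @ [a]) w) [b] u
          + rconc (stuffle v w) [a + b] u)"
proof (induction "length v + length w" arbitrary: v w rule: less_induct)
  case less
  show ?case
  proof (cases v; cases w)
    fix w' b'
    assume "v = []" "w = b' # w'"
    then show ?thesis
      using less[of "[]" w'] by (simp add: ac_simps)
  next
    fix v' a'
    assume "v = a' # v'" "w = []"
    then show ?thesis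
      using less[of v' "[]"] by (simp add: ac_simps)
  next
    fix v' w' a' b'
    assume "v = a' # v'" "w = b' # w'"
    then show ?thesis
      using less[of v' w] less[of v w'] less[of v' w'] by (simp add: ac_simps)
  qed (simp add: ac_simps)
qed

lemma stuffle_eq_0_if_sum_list_ne:
  "sum_list u \<noteq> sum_list v + sum_list w \<Longrightarrow> stuffle v w u = 0"
  by (induction v w arbitrary: u rule: stuffle.induct) (auto simp: lcons_def split: list.split)

lemma word_trailing_zeros_cases:
  obtains (zeros) t where "u = replicate t (0::nat)"
  | (tail) v c t where "c > 0" "u = v @ c # replicate t 0"
proof (induction u rule: rev_induct)
  case (snoc d u)
  show ?case
  proof (cases "d = 0")
    case True
    show ?thesis
    proof (rule snoc.IH)
      fix t
      assume "u = replicate t 0"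
      then show thesis
        using snoc.prems(1)[of "Suc t"] True by (simp add: replicate_append_same)
    next
      fix v c t
      assume "c > 0" "u = v @ c # replicate t 0"
      then show thesis
        using snoc.prems(2)[of c v "Suc t"] True by (simp add: replicate_append_same)
    qed
  next
    case False
    then show ?thesis
      using snoc.prems(2)[of d u 0] by simp
  qed
qed simp

lemma replicate_0_append_Cons_eq_iff:
  assumes "c \<noteq> 0" "a \<noteq> (0::nat)"
  shows "replicate t 0 @ c # xs = replicate s 0 @ a # ys \<longleftrightarrow> t = s \<and> c = a \<and> xs = ys"
  using assms
proof (induction t arbitrary: s)
  case 0
  then show ?case
    by (cases s) auto
next
  case (Suc t)
  then show ?case
    by (cases s) auto
qed

lemma rconc_trailing_zeros:
  assumes "a > 0" "c > 0"
  shows "rconc P (a # replicate s 0) (u @ c # replicate t 0) = (if a = c \<and> s = t then P u else 0)"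
proof (cases "\<exists>y. u @ c # replicate t 0 = y @ a # replicate s 0")
  case True
  then obtain y where "rev (u @ c # replicate t 0) = rev (y @ a # replicate s 0)"
    by metis
  then show ?thesis
    using assms by (simp add: replicate_0_append_Cons_eq_iff)
next
  case False
  then show ?thesis
    by (auto simp: rconc_altdef)
qed

lemma rconc_replicate_0:
  assumes "a > 0"
  shows "rconc P (a # z) (replicate t 0) = 0"
proof -
  have "replicate t 0 \<noteq> y @ a # z" for y
  proof
    assume "replicate t 0 = y @ a # z"
    then have "a \<in> set (replicate t 0)"
      by simp
    then show False
      using assms by simp
  qed
  then show ?thesis
    by (auto simp: rconc_altdef)
qed

(* Lattice paths from (n, m) to (0, 0) with t steps (-1,0), (0,-1), (-1,-1): choose which n
   steps decrease the first coordinate, and which n + m - t of these are diagonal. *)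
definition delannoy :: "nat \<Rightarrow> nat \<Rightarrow> nat \<Rightarrow> nat" where
  "delannoy n m t = (if t \<le> n + m then (t choose n) * (n choose (n + m - t)) else 0)"

lemma delannoy_0_steps: "delannoy n m 0 = (if n = 0 \<and> m = 0 then 1 else 0)"
  by (simp add: delannoy_def)

lemma delannoy_0_0_Suc [simp]: "delannoy 0 0 (Suc t) = 0"
  by (simp add: delannoy_def)

lemma delannoy_0_Suc_Suc [simp]: "delannoy 0 (Suc m) (Suc t) = delannoy 0 m t"
  by (simp add: delannoy_def)

lemma delannoy_Suc_0_Suc [simp]: "delannoy (Suc n) 0 (Suc t) = delannoy n 0 t"
  by (cases "t = n") (auto simp: delannoy_def binomial_eq_0)

lemma delannoy_Suc_Suc_Suc:
  "delannoy (Suc n) (Suc m) (Suc t) = delannoy n (Suc m) t + delannoy (Suc n) m t + delannoy n m t"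
proof (cases "t \<le> n + m")
  case True
  then obtain d where "n + m = t + d"
    using le_Suc_ex by blast
  then show ?thesis
    by (cases d) (simp_all add: delannoy_def algebra_simps)
next
  case False
  then show ?thesis
    by (cases "t = Suc (n + m)") (simp_all add: delannoy_def)
qed

lemma sum_choose_eq_delannoy:
  "(\<Sum>k=0..j. if n + k = t then ((n + k) choose n) * (n choose (j - k)) else 0) = delannoy n j t"
proof (cases "n \<le> t")
  case True
  have "(\<Sum>k=0..j. if n + k = t then ((n + k) choose n) * (n choose (j - k)) else 0) =
        (\<Sum>k=0..j. if k = t - n then (t choose n) * (n choose (j - k)) else 0)"
    using True by (intro sum.cong) auto
  moreover have "t - n \<le> j \<longleftrightarrow> t \<le> n + j" "j - (t - n) = n + j - t"
    using True by auto
  ultimately show ?thesis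
    by (simp add: delannoy_def)
qed (auto simp: delannoy_def binomial_eq_0)

(* Paths from (n, m) ending at (0, i) after t steps, weighted by Y i. *)
definition delannoy_conv :: "(nat \<Rightarrow> 'a::semiring_1) \<Rightarrow> nat \<Rightarrow> nat \<Rightarrow> nat \<Rightarrow> 'a" where
  "delannoy_conv Y n m t = (\<Sum>j=0..m. of_nat (delannoy n j t) * Y (m - j))"

lemma delannoy_conv_0_steps: "delannoy_conv Y n m 0 = (if n = 0 then Y m else 0)"
proof -
  have "delannoy_conv Y n m 0 = (\<Sum>j=0..m. if j = 0 then (if n = 0 then Y m else 0) else 0)"
    unfolding delannoy_conv_def by (intro sum.cong) (auto simp: delannoy_0_steps)
  then show ?thesis
    by simp
qed

lemma delannoy_conv_Suc:
  "delannoy_conv Y n (Suc m) t =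
     of_nat (delannoy n 0 t) * Y (Suc m) + (\<Sum>j=0..m. of_nat (delannoy n (Suc j) t) * Y (m - j))"
  unfolding delannoy_conv_def sum.atLeast0_atMost_Suc_shift by simp

lemma delannoy_conv_0_0_Suc [simp]: "delannoy_conv Y 0 0 (Suc t) = 0"
  by (simp add: delannoy_conv_def)

lemma delannoy_conv_0_Suc_Suc [simp]: "delannoy_conv Y 0 (Suc m) (Suc t) = delannoy_conv Y 0 m t"
  by (simp only: delannoy_conv_Suc) (simp add: delannoy_conv_def)

lemma delannoy_conv_Suc_0_Suc [simp]: "delannoy_conv Y (Suc n) 0 (Suc t) = delannoy_conv Y n 0 t"
  by (simp add: delannoy_conv_def)

lemma delannoy_conv_Suc_Suc_Suc:
  "delannoy_conv Y (Suc n) (Suc m) (Suc t) =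
     delannoy_conv Y n (Suc m) t + delannoy_conv Y (Suc n) m t + delannoy_conv Y n m t"
  by (simp only: delannoy_conv_Suc)
    (simp add: delannoy_conv_def delannoy_Suc_Suc_Suc sum.distrib algebra_simps)

lemma stuffle_snoc_at_snoc:
  "stuffle (v @ [a]) (w @ [b]) (u @ [c]) =
     (if c = a then stuffle v (w @ [b]) u else 0) + (if c = b then stuffle (v @ [a]) w u else 0)
     + (if c = a + b then stuffle v w u else 0)"
  by (simp add: stuffle_snoc)

lemma stuffle_trailing_zeros_at_snoc:
  assumes "c > 0"
  shows "stuffle (A @ j1 # replicate n1 0) (B @ j2 # replicate n2 0) (u @ [c]) =
    (if n1 = 0 then \<Sum>\<epsilon>=0..min 1 n2.
        if c = j1 then stuffle A (B @ j2 # replicate (n2 - \<epsilon>) 0) u else 0 else 0)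
  + (if n2 = 0 then \<Sum>\<epsilon>=0..min 1 n1.
        if c = j2 then stuffle (A @ j1 # replicate (n1 - \<epsilon>) 0) B u else 0 else 0)
  + (if n1 = 0 \<and> n2 = 0 \<and> c = j1 + j2 then stuffle A B u else 0)"
proof (cases n1; cases n2)
  assume "n1 = 0" "n2 = 0"
  then show ?thesis
    using stuffle_snoc_at_snoc[of A j1 B j2 u c] by simp
next
  fix m
  assume "n1 = 0" "n2 = Suc m"
  then show ?thesis
    using stuffle_snoc_at_snoc[of A j1 "B @ j2 # replicate m 0" 0 u c] assms
    by (simp add: replicate_append_same flip: replicate_Suc)
next
  fix n
  assume "n1 = Suc n" "n2 = 0"
  then show ?thesis
    using stuffle_snoc_at_snoc[of "A @ j1 # replicate n 0" 0 B j2 u c] assms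
    by (simp add: replicate_append_same flip: replicate_Suc)
next
  fix n m
  assume "n1 = Suc n" "n2 = Suc m"
  then show ?thesis
    using stuffle_snoc_at_snoc[of "A @ j1 # replicate n 0" 0 "B @ j2 # replicate m 0" 0 u c] assms
    by (simp add: replicate_append_same flip: replicate_Suc)
qed

lemma stuffle_coeff_trailing_zeros:
  assumes "j1 > 0" "j2 > 0" "c > 0"
  shows "stuffle (A @ j1 # replicate n1 0) (B @ j2 # replicate n2 0) (u @ c # replicate t 0) =
    delannoy_conv (\<lambda>i. \<Sum>\<epsilon>=0..min 1 i.
        if c = j1 then stuffle A (B @ j2 # replicate (i - \<epsilon>) 0) u else 0) n1 n2 t
  + delannoy_conv (\<lambda>i. \<Sum>\<epsilon>=0..min 1 i.
        if c = j2 then stuffle (A @ j1 # replicate (i - \<epsilon>) 0) B u else 0) n2 n1 t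
  + of_nat (delannoy n1 n2 t) * (if c = j1 + j2 then stuffle A B u else 0)"
proof (induction t arbitrary: n1 n2)
  case 0
  show ?case
    unfolding replicate_0 stuffle_trailing_zeros_at_snoc[OF assms(3)]
    by (auto simp: delannoy_conv_0_steps delannoy_0_steps)
next
  case (Suc t)
  let ?x = "u @ c # replicate t 0"
  show ?case
  proof (cases n1; cases n2)
    assume "n1 = 0" "n2 = 0"
    then show ?thesis
      using stuffle_snoc_at_snoc[of A j1 B j2 ?x 0] assms
      by (simp add: replicate_append_same flip: replicate_Suc)
  next
    fix m
    assume "n1 = 0" "n2 = Suc m"
    then show ?thesis
      using stuffle_snoc_at_snoc[of A j1 "B @ j2 # replicate m 0" 0 ?x 0] Suc.IH[of 0 m] assms
      by (simp add: replicate_append_same flip: replicate_Suc)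
  next
    fix n
    assume "n1 = Suc n" "n2 = 0"
    then show ?thesis
      using stuffle_snoc_at_snoc[of "A @ j1 # replicate n 0" 0 B j2 ?x 0] Suc.IH[of n 0] assms
      by (simp add: replicate_append_same flip: replicate_Suc)
  next
    fix n m
    assume "n1 = Suc n" "n2 = Suc m"
    then show ?thesis
      using stuffle_snoc_at_snoc[of "A @ j1 # replicate n 0" 0 "B @ j2 # replicate m 0" 0 ?x 0]
        Suc.IH[of n "Suc m"] Suc.IH[of "Suc n" m] Suc.IH[of n m]
      by (simp add: delannoy_conv_Suc_Suc_Suc delannoy_Suc_Suc_Suc algebra_simps
          replicate_append_same flip: replicate_Suc)
  qed
qed

lemma sum_rconc_eq_delannoy_conv:
  assumes "a > 0" "c > 0"
  shows "(\<Sum>j=0..m. \<Sum>k=0..j. \<Sum>\<epsilon>=0..min 1 (m - j).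
            of_nat ((n + k) choose n) * of_nat (n choose (j - k)) *
            rconc (P (m - j - \<epsilon>)) (a # replicate (n + k) 0) (u @ c # replicate t 0))
       = delannoy_conv (\<lambda>i. \<Sum>\<epsilon>=0..min 1 i. if c = a then P (i - \<epsilon>) u else 0) n m t"
  unfolding delannoy_conv_def sum_choose_eq_delannoy[symmetric] of_nat_sum sum_distrib_right
  unfolding sum_distrib_left
  using assms by (intro sum.cong refl) (auto simp: rconc_trailing_zeros)

lemma sum_rconc_eq_delannoy:
  assumes "a > 0" "c > 0"
  shows "(\<Sum>k=0..m. of_nat ((n + k) choose n) * of_nat (n choose (m - k)) *
            rconc P (a # replicate (n + k) 0) (u @ c # replicate t 0))
       = of_nat (delannoy n m t) * (if c = a then P u else 0)"
  unfolding sum_choose_eq_delannoy[symmetric] of_nat_sum sum_distrib_right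
  using assms by (intro sum.cong refl) (auto simp: rconc_trailing_zeros)

theorem lemma2p2:
  fixes W1' W2' :: "nat list" and j1 j2 n1 n2 :: nat
  assumes "j1 > 0" and "j2 > 0"
  shows "stuffle (W1' @ [j1] @ replicate n1 0) (W2' @ [j2] @ replicate n2 0) =
    (\<lambda>u.
      (\<Sum>j = 0..n2. \<Sum>k = 0..j. \<Sum>\<epsilon> = 0..min 1 (n2 - j).
          of_nat ((n1 + k) choose n1) * of_nat (n1 choose (j - k)) *
          rconc (stuffle W1' (W2' @ [j2] @ replicate (n2 - j - \<epsilon>) 0))
                ([j1] @ replicate (n1 + k) 0) u)
    + (\<Sum>j = 0..n1. \<Sum>k = 0..j. \<Sum>\<epsilon> = 0..min 1 (n1 - j).
          of_nat ((n2 + k) choose n2) * of_nat (n2 choose (j - k)) *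
          rconc (stuffle (W1' @ [j1] @ replicate (n1 - j - \<epsilon>) 0) W2')
                ([j2] @ replicate (n2 + k) 0) u)
    + (\<Sum>k = 0..n2.
          of_nat ((n1 + k) choose n1) * of_nat (n1 choose (n2 - k)) *
          rconc (stuffle W1' W2') ([j1 + j2] @ replicate (n1 + k) 0) u))"
proof (rule ext, goal_cases)
  case (1 u)
  show ?case
  proof (cases u rule: word_trailing_zeros_cases)
    case (zeros t)
    then show ?thesis
      using assms by (simp add: stuffle_eq_0_if_sum_list_ne rconc_replicate_0 sum_list_replicate)
  next
    case (tail v c t)
    show ?thesis
      unfolding tail(2) append_Cons append_Nil
        sum_rconc_eq_delannoy_conv[OF assms(1) tail(1),
          where P = "\<lambda>q. stuffle W1' (W2' @ j2 # replicate q 0)"]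
        sum_rconc_eq_delannoy_conv[OF assms(2) tail(1),
          where P = "\<lambda>q. stuffle (W1' @ j1 # replicate q 0) W2'"]
        sum_rconc_eq_delannoy[OF add_pos_pos[OF assms] tail(1)]
      using assms tail(1) by (rule stuffle_coeff_trailing_zeros)
  qed
qed

end
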